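(* Consider the Geo-Geo system with parameters $\mu_A,\mu_B\in(0,1)$. Its average AoI is $$\overline{\Delta}_{\text{Geo-Geo}}(\mu_A,\mu_B)=\frac{2\big(\mu_A^2+\mu_B^2+3\mu_A\mu_B-3\mu_A^2\mu_B-3\mu_A\mu_B^2+2\mu_A^2\mu_B^2\big)}{(\mu_A+\mu_B-\mu_A\mu_B)^3}.$$
   Context: **Time and sensors.** Time is slotted. Two sensors independently send time-stamped status updates about the same process to one monitor under the zero-wait policy: a new update is generated at the start of the slot right after the previous update of that sensor is delivered, with instantaneous acknowledgements. In the Geo-Geo system, sensor A completes its current update in each slot independently with probability $\mu_A$, and sensor B does so independently with probability $\mu_B$. Thus both sensors have i.i.d. geometric service times on $\{1,2,\dots\}$, with parameters $\mu_A$ and $\mu_B$. **AoI.** The monitor's AoI is $\Delta[t]=t-u(t)$, where $u(t)$ is the generation time of the freshest received update. It evolves by - $\Delta[t+1]=\Delta[t]+1$ if nothing is delivered in slot $t$; - $\Delta[t+1]=\min(t-G_i+1,\Delta[t]+1)$ otherwise, with $G_i$ the generation time of the delivered update. Equivalently, the system AoI is the minimum of the AoIs that each single sensor's update stream alone would produce. The average AoI is its long-run time average in steady state. *)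

theory Defs
  imports "HOL-Probability.Probability"
begin

text \<open>A sample path is a function
  w :: nat => bool * bool; fst (w t) (resp. snd (w t)) says that sensor A
  (resp. B) completes (delivers) its current update in slot t.\<close>

text \<open>Generation time of the update a sensor has in service during slot t
  (zero-wait: a fresh update replaces a delivered one immediately).
  Convention: the update delivered in slot t is replaced by one
  with time stamp t.\<close>
fun gen :: "(nat \<Rightarrow> bool) \<Rightarrow> nat \<Rightarrow> nat" where
  "gen c 0 = 0"
| "gen c (Suc t) = (if c t then t else gen c t)"

fun aoi :: "(nat \<Rightarrow> bool \<times> bool) \<Rightarrow> nat \<Rightarrow> nat" where
  "aoi w 0 = 0"
| "aoi w (Suc t) =
     (let d = aoi w t + 1;
          dA = (if fst (w t) then t - gen (\<lambda>s. fst (w s)) t + 1 else d);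
          dB = (if snd (w t) then t - gen (\<lambda>s. snd (w s)) t + 1 else d)
      in min d (min dA dB))"

definition slots_pmf :: "real \<Rightarrow> real \<Rightarrow> nat \<Rightarrow> (nat \<Rightarrow> bool \<times> bool) pmf" where
  "slots_pmf muA muB T =
     Pi_pmf {..<T} (False, False) (\<lambda>_. pair_pmf (bernoulli_pmf muA) (bernoulli_pmf muB))"

text \<open>E[Delta[t]] (Delta[t] only depends on slots 0..t-1).\<close>
definition expected_aoi :: "real \<Rightarrow> real \<Rightarrow> nat \<Rightarrow> real" where
  "expected_aoi muA muB t =
     measure_pmf.expectation (slots_pmf muA muB t) (\<lambda>w. real (aoi w t))"

definition avg_aoi_upto :: "real \<Rightarrow> real \<Rightarrow> nat \<Rightarrow> real" where
  "avg_aoi_upto muA muB T = (\<Sum>t<T. expected_aoi muA muB t) / real T"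

end

theory Submission
  imports Defs
begin

text \<open>
  The AoI at time t exceeds k iff each sensor completed at most one update during the last k slots:
  then the freshest update it delivered was generated before that window.  The completion counts of
  the two sensors in a window of length k are independent Binomial(k, muA) and Binomial(k, muB)
  variables, so E \<Delta>[t] is the sum over k < t of P(Bin(k, muA) \<le> 1) P(Bin(k, muB) \<le> 1).  These
  terms are a quadratic polynomial in k times ((1 - muA)(1 - muB))^k, so E \<Delta>[t] converges to
  the closed form, and so does its Cesaro mean, the time-average AoI.
\<close>

lemma Pi_pmf_pair_pmf:
  assumes "finite A"
  shows "Pi_pmf A (d, e) (\<lambda>x. pair_pmf (p x) (q x)) =
    map_pmf (\<lambda>(f, g) x. (f x, g x)) (pair_pmf (Pi_pmf A d p) (Pi_pmf A e q))"
proof -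
  have "Pi_pmf A (d, e) (\<lambda>x. pair_pmf (p x) (q x)) =
      Pi_pmf A (d, e) (\<lambda>x. p x \<bind> (\<lambda>a. q x \<bind> (\<lambda>b. return_pmf (a, b))))"
    by (simp add: pair_pmf_def)
  also have "\<dots> = Pi_pmf A d p \<bind> (\<lambda>f. Pi_pmf A e q \<bind> (\<lambda>g. Pi_pmf A (d, e) (\<lambda>x. return_pmf (f x, g x))))"
    using assms by (simp add: Pi_pmf_bind[where d' = d] Pi_pmf_bind[where d' = e])
  also have "\<dots> = Pi_pmf A d p \<bind> (\<lambda>f. Pi_pmf A e q \<bind> (\<lambda>g. return_pmf (\<lambda>x. (f x, g x))))"
    using assms set_Pi_pmf_subset[OF assms, of d p] set_Pi_pmf_subset[OF assms, of e q]
    by (intro bind_pmf_cong refl) (auto simp: fun_eq_iff)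
  also have "\<dots> = map_pmf (\<lambda>(f, g) x. (f x, g x)) (pair_pmf (Pi_pmf A d p) (Pi_pmf A e q))"
    by (simp add: pair_pmf_def map_pmf_def bind_assoc_pmf bind_return_pmf)
  finally show ?thesis .
qed

lemma pair_binomial_pmf_altdef:
  assumes "finite A" "card A = n" "p \<in> {0..1}" "q \<in> {0..1}"
  shows "pair_pmf (binomial_pmf n p) (binomial_pmf n q) =
    map_pmf (\<lambda>w. (card {x \<in> A. fst (w x)}, card {x \<in> A. snd (w x)}))
      (Pi_pmf A (d, e) (\<lambda>_. pair_pmf (bernoulli_pmf p) (bernoulli_pmf q)))"
  using assms
  by (simp add: Pi_pmf_pair_pmf pmf.map_comp o_def case_prod_beta' map_pair[symmetric]
      binomial_pmf_altdef'[of A n p d] binomial_pmf_altdef'[of A n q e])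

lemma prob_binomial_pmf_atMost_1:
  assumes "p \<in> {0..1}"
  shows "measure_pmf.prob (binomial_pmf n p) {..1} = (1 - p)^n + n * p * (1 - p)^(n - 1)"
proof -
  have "{..1::nat} = {0, 1}" by auto
  then show ?thesis
    using assms by (simp add: measure_measure_pmf_finite)
qed

lemma has_field_derivative_inverse_one_minus_square:
  fixes z :: real
  assumes "z \<noteq> 1"
  shows "((\<lambda>z. 1 / (1 - z)^2) has_field_derivative 2 / (1 - z)^3) (at z)"
proof -
  have "((\<lambda>z. 1 / (1 - z)^2) has_field_derivative - (1 * (of_nat 2 * (1 - z) ^ (2 - 1) * - 1)) / ((1 - z)^2)^2) (at z)"
    using assms by (auto intro!: derivative_eq_intros)
  moreover have "- (1 * (of_nat 2 * u ^ (2 - 1) * - 1)) / (u^2)^2 = 2 / u^3" if "u \<noteq> 0" for u :: real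
    using that by (simp add: field_simps eval_nat_numeral)
  ultimately show ?thesis
    using assms by (metis DERIV_cong right_minus_eq)
qed

lemma sums_Suc_mult_Suc_Suc_power:
  fixes z :: real
  assumes "\<bar>z\<bar> < 1"
  shows "(\<lambda>n. real (Suc n) * real (Suc (Suc n)) * z^n) sums (2 / (1 - z)^3)"
proof -
  have "(\<lambda>n. diffs (\<lambda>n. real (Suc n)) n * z^n) sums (2 / (1 - z)^3)"
  proof (rule termdiffs_sums_strong[where K = 1 and f = "\<lambda>z. 1 / (1 - z)^2"])
    show "(\<lambda>n. real (Suc n) * z^n) sums (1 / (1 - z)^2)" if "norm z < 1" for z :: real
      using that by (rule geometric_deriv_sums)
    show "((\<lambda>z. 1 / (1 - z)^2) has_field_derivative 2 / (1 - z)^3) (at z)"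
      using assms by (intro has_field_derivative_inverse_one_minus_square) auto
  qed (use assms in auto)
  then show ?thesis
    by (simp add: diffs_def mult_ac)
qed

lemma LIMSEQ_cesaro_mean_zero:
  fixes y :: "nat \<Rightarrow> real"
  assumes "y \<longlonglongrightarrow> 0"
  shows "(\<lambda>T. (\<Sum>t<T. y t) / T) \<longlonglongrightarrow> 0"
proof (rule LIMSEQ_I)
  fix e :: real
  assume "0 < e"
  then obtain N where N: "\<And>t. N \<le> t \<Longrightarrow> \<bar>y t\<bar> < e / 2"
    using LIMSEQ_D[OF assms, of "e / 2"] by (metis half_gt_zero diff_zero real_norm_def)
  define C where "C = (\<Sum>t<N. \<bar>y t\<bar>)"
  obtain M :: nat where M: "2 * C / e < M"
    using reals_Archimedean2 by blast
  have "\<bar>(\<Sum>t<T. y t) / T\<bar> < e" if T: "max (Suc M) N \<le> T" for T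
  proof -
    have "\<bar>\<Sum>t<T. y t\<bar> \<le> (\<Sum>t<T. \<bar>y t\<bar>)"
      by (rule sum_abs)
    also have "\<dots> = C + (\<Sum>t\<in>{N..<T}. \<bar>y t\<bar>)"
      using T sum.atLeastLessThan_concat[of 0 N T "\<lambda>t. \<bar>y t\<bar>"]
      by (simp add: C_def atLeast0LessThan)
    also have "(\<Sum>t\<in>{N..<T}. \<bar>y t\<bar>) \<le> (\<Sum>t\<in>{N..<T}. e / 2)"
      using N by (intro sum_mono) (simp add: less_imp_le)
    also have "\<dots> \<le> T * (e / 2)"
      using \<open>0 < e\<close> by simp
    finally have "\<bar>\<Sum>t<T. y t\<bar> \<le> C + T * (e / 2)"
      by simp
    moreover have "C < T * (e / 2)"
    proof -
      have "2 * C < e * M"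
        using M \<open>0 < e\<close> by (simp add: field_simps)
      also have "\<dots> < e * T"
        using T \<open>0 < e\<close> by simp
      finally show ?thesis
        by (simp add: mult.commute)
    qed
    ultimately show ?thesis
      using T by (simp add: field_simps)
  qed
  then show "\<exists>T0. \<forall>T\<ge>T0. norm ((\<Sum>t<T. y t) / T - 0) < e"
    by (intro exI[of _ "max (Suc M) N"]) simp
qed

lemma LIMSEQ_cesaro_mean:
  fixes x :: "nat \<Rightarrow> real"
  assumes "x \<longlonglongrightarrow> L"
  shows "(\<lambda>T. (\<Sum>t<T. x t) / T) \<longlonglongrightarrow> L"
proof -
  have "(\<lambda>T. (\<Sum>t<T. x t - L) / T + L) \<longlonglongrightarrow> 0 + L"
    using assms by (intro tendsto_add LIMSEQ_cesaro_mean_zero tendsto_const) (simp add: LIM_zero)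
  moreover have "\<forall>\<^sub>F T in sequentially. (\<Sum>t<T. x t - L) / T + L = (\<Sum>t<T. x t) / T"
    using eventually_gt_at_top[of 0] by eventually_elim (simp add: sum_subtractf field_simps)
  ultimately show ?thesis
    by (simp add: Lim_transform_eventually)
qed

definition recent_completions :: "(nat \<Rightarrow> bool) \<Rightarrow> nat \<Rightarrow> nat \<Rightarrow> nat" where
  "recent_completions c t k = card {s \<in> {t - k..<t}. c s}"

lemma recent_completions_0 [simp]: "recent_completions c t 0 = 0"
  by (simp add: recent_completions_def)

lemma recent_completions_Suc:
  assumes "k \<le> t"
  shows "recent_completions c (Suc t) (Suc k) = recent_completions c t k + of_bool (c t)"
proof -
  have "{s \<in> {Suc t - Suc k..<Suc t}. c s} =
      (if c t then insert t {s \<in> {t - k..<t}. c s} else {s \<in> {t - k..<t}. c s})"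
    using assms by (auto simp: less_Suc_eq)
  then show ?thesis
    by (simp add: recent_completions_def)
qed

lemma gen_le: "gen c t \<le> t"
  by (induction t) auto

lemma less_diff_gen_iff: "k < t - gen c t \<longleftrightarrow> k < t \<and> recent_completions c t k = 0"
proof (induction t arbitrary: k)
  case (Suc t)
  show ?case
  proof (cases k)
    case 0
    then show ?thesis using gen_le[of c t] by simp
  next
    case (Suc j)
    show ?thesis
    proof (cases "j < t")
      case True
      then have "recent_completions c (Suc t) k = recent_completions c t j + of_bool (c t)"
        by (simp add: Suc recent_completions_Suc)
      then show ?thesis
        using Suc.IH[of j] gen_le[of c t] \<open>k = Suc j\<close> True by auto
    qed (use Suc gen_le[of c t] in auto)
  qed
qed simp

text \<open>Generation time of the freshest update of a sensor delivered before slot t (0 if none).\<close>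

fun delivered_gen :: "(nat \<Rightarrow> bool) \<Rightarrow> nat \<Rightarrow> nat" where
  "delivered_gen c 0 = 0"
| "delivered_gen c (Suc t) = (if c t then gen c t else delivered_gen c t)"

lemma delivered_gen_le_gen: "delivered_gen c t \<le> gen c t"
  by (induction t) (auto simp: gen_le)

lemma less_diff_delivered_gen_iff:
  "k < t - delivered_gen c t \<longleftrightarrow> k < t \<and> recent_completions c t k \<le> 1"
proof (induction t arbitrary: k)
  case (Suc t)
  show ?case
  proof (cases k)
    case 0
    then show ?thesis using delivered_gen_le_gen[of c t] gen_le[of c t] by simp
  next
    case (Suc j)
    show ?thesis
    proof (cases "j < t")
      case True
      then have "recent_completions c (Suc t) k = recent_completions c t j + of_bool (c t)"
        by (simp add: Suc recent_completions_Suc)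
      then show ?thesis
        using Suc.IH[of j] less_diff_gen_iff[of j t c] delivered_gen_le_gen[of c t] gen_le[of c t]
          \<open>k = Suc j\<close> True
        by auto
    qed (use Suc delivered_gen_le_gen[of c t] gen_le[of c t] in auto)
  qed
qed simp

lemma Suc_diff_delivered_gen:
  "Suc t - delivered_gen c (Suc t) = Suc (if c t then t - gen c t else t - delivered_gen c t)"
  using gen_le[of c t] delivered_gen_le_gen[of c t] by auto

lemma aoi_eq_min_delivered_gen:
  "aoi w t = min (t - delivered_gen (\<lambda>s. fst (w s)) t) (t - delivered_gen (\<lambda>s. snd (w s)) t)"
proof (induction t)
  case (Suc t)
  have min_step: "min (min x y + 1) (min (if a then x' + 1 else min x y + 1) (if b then y' + 1 else min x y + 1))
      = min (Suc (if a then x' else x)) (Suc (if b then y' else y))"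
    if "x' \<le> x" "y' \<le> y" for a b :: bool and x x' y y' :: nat
    using that by (cases a; cases b) (simp_all add: min_def)
  have "t - gen c t \<le> t - delivered_gen c t" for c
    using delivered_gen_le_gen[of c t] by simp
  then show ?case
    unfolding Suc_diff_delivered_gen aoi.simps(2) Suc.IH Let_def by (intro min_step)
qed simp

lemma less_aoi_iff:
  "k < aoi w t \<longleftrightarrow> k < t \<and> recent_completions (\<lambda>s. fst (w s)) t k \<le> 1
     \<and> recent_completions (\<lambda>s. snd (w s)) t k \<le> 1"
  by (auto simp: aoi_eq_min_delivered_gen less_diff_delivered_gen_iff)

lemma aoi_eq_card:
  "aoi w t = card {k \<in> {..<t}. recent_completions (\<lambda>s. fst (w s)) t k \<le> 1
     \<and> recent_completions (\<lambda>s. snd (w s)) t k \<le> 1}"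
proof -
  have "{k \<in> {..<t}. recent_completions (\<lambda>s. fst (w s)) t k \<le> 1
     \<and> recent_completions (\<lambda>s. snd (w s)) t k \<le> 1} = {..<aoi w t}"
    by (auto simp: less_aoi_iff)
  then show ?thesis by simp
qed

text \<open>For k < t this is P(\<Delta>[t] > k); the sensor factors are P(Bin(k, \<mu>) \<le> 1).\<close>

definition aoi_tail :: "real \<Rightarrow> real \<Rightarrow> nat \<Rightarrow> real" where
  "aoi_tail a b k = ((1 - a)^k + k * a * (1 - a)^(k - 1)) * ((1 - b)^k + k * b * (1 - b)^(k - 1))"

lemma prob_recent_completions_le_1:
  assumes "a \<in> {0..1}" "b \<in> {0..1}" "k \<le> t"
  shows "measure_pmf.prob (slots_pmf a b t)
      {w. recent_completions (\<lambda>s. fst (w s)) t k \<le> 1 \<and> recent_completions (\<lambda>s. snd (w s)) t k \<le> 1}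
    = aoi_tail a b k"
proof -
  define window where "window = {t - k..<t}"
  define P where "P = (\<lambda>_::nat. pair_pmf (bernoulli_pmf a) (bernoulli_pmf b))"
  define counts where "counts = (\<lambda>w::nat \<Rightarrow> bool \<times> bool.
    (card {s \<in> window. fst (w s)}, card {s \<in> window. snd (w s)}))"
  define restrict_window where "restrict_window = (\<lambda>(w::nat \<Rightarrow> bool \<times> bool) s. if s \<in> window then w s else (False, False))"
  have card_window: "card window = k"
    using assms(3) by (simp add: window_def)
  have counts_restrict: "counts (restrict_window w) = counts w" for w
  proof -
    have "{s \<in> window. f (restrict_window w s)} = {s \<in> window. f (w s)}" for f :: "bool \<times> bool \<Rightarrow> bool"
      by (auto simp: restrict_window_def)
    then show ?thesis by (simp add: counts_def)
  qed
  have event: "{w. recent_completions (\<lambda>s. fst (w s)) t k \<le> 1 \<and> recent_completions (\<lambda>s. snd (w s)) t k \<le> 1}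
      = counts -` ({..1} \<times> {..1})"
    by (auto simp: recent_completions_def counts_def window_def)
  have window_pmf: "map_pmf restrict_window (slots_pmf a b t) = Pi_pmf window (False, False) P"
    unfolding slots_pmf_def restrict_window_def P_def window_def by (rule Pi_pmf_subset[symmetric]) auto
  have "measure_pmf.prob (slots_pmf a b t) (counts -` ({..1} \<times> {..1}))
      = measure_pmf.prob (map_pmf restrict_window (slots_pmf a b t)) (counts -` ({..1} \<times> {..1}))"
    by (simp add: vimage_def counts_restrict)
  also have "\<dots> = measure_pmf.prob (map_pmf counts (Pi_pmf window (False, False) P)) ({..1} \<times> {..1})"
    by (simp add: window_pmf)
  also have "map_pmf counts (Pi_pmf window (False, False) P) = pair_pmf (binomial_pmf k a) (binomial_pmf k b)"
    using assms card_window
    by (simp add: pair_binomial_pmf_altdef[of window k a b False False] window_def counts_def P_def)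
  also have "measure_pmf.prob \<dots> ({..1} \<times> {..1}) = aoi_tail a b k"
    using assms prob_binomial_pmf_atMost_1[of a k] prob_binomial_pmf_atMost_1[of b k]
    by (simp add: measure_pmf_prob_product aoi_tail_def)
  finally show ?thesis
    unfolding event .
qed

lemma expected_aoi_eq_sum_aoi_tail:
  assumes "a \<in> {0..1}" "b \<in> {0..1}"
  shows "expected_aoi a b t = (\<Sum>k<t. aoi_tail a b k)"
proof -
  let ?E = "\<lambda>k. {w. recent_completions (\<lambda>s. fst (w s)) t k \<le> 1 \<and> recent_completions (\<lambda>s. snd (w s)) t k \<le> 1}"
  have "real (aoi w t) = (\<Sum>k<t. indicator (?E k) w)" for w
    by (simp add: aoi_eq_card indicator_def of_bool_def[symmetric] Int_def)
  then have "expected_aoi a b t = measure_pmf.expectation (slots_pmf a b t) (\<lambda>w. \<Sum>k<t. indicator (?E k) w)"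
    by (simp add: expected_aoi_def)
  also have "\<dots> = (\<Sum>k<t. measure_pmf.prob (slots_pmf a b t) (?E k))"
    by (subst Bochner_Integration.integral_sum) (auto intro!: measure_pmf.integrable_const_bound[where B = 1])
  also have "\<dots> = (\<Sum>k<t. aoi_tail a b k)"
    using assms by (intro sum.cong refl prob_recent_completions_le_1) auto
  finally show ?thesis .
qed

lemma binomial_atMost_1_factor:
  fixes p :: real
  assumes "p \<noteq> 1"
  shows "(1 - p)^k + k * p * (1 - p)^(k - 1) = (1 - p)^k * (1 + k * (p / (1 - p)))"
  using assms by (cases k) (simp_all add: field_simps)

lemma aoi_tail_sums:
  fixes a b :: real
  assumes "0 < a" "a < 1" "0 < b" "b < 1"
  shows "aoi_tail a b sums
    (2 * (a^2 + b^2 + 3*a*b - 3*a^2*b - 3*a*b^2 + 2*a^2*b^2) / (a + b - a*b)^3)"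
proof -
  define r where "r = (1 - a) * (1 - b)"
  define \<alpha> where "\<alpha> = a / (1 - a)"
  define \<beta> where "\<beta> = b / (1 - b)"
  have "0 < r"
    using assms by (simp add: r_def)
  moreover have "r < 1 * 1"
    unfolding r_def by (rule mult_strict_mono) (use assms in auto)
  ultimately have "r < 1" "\<bar>r\<bar> < 1"
    by simp_all
  txt \<open>Expand in the basis r^n, (n+1) r^n, (n+1)(n+2) r^n, with sums 1/(1-r), 1/(1-r)^2, 2/(1-r)^3.\<close>
  have "aoi_tail a b = (\<lambda>n. (1 - \<alpha> - \<beta> + \<alpha> * \<beta>) * r^n
      + (\<alpha> + \<beta> - 3 * \<alpha> * \<beta>) * (real (Suc n) * r^n) + \<alpha> * \<beta> * (real (Suc n) * real (Suc (Suc n)) * r^n))"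
  proof
    fix n
    have "aoi_tail a b n = (1 - a)^n * (1 + n * \<alpha>) * ((1 - b)^n * (1 + n * \<beta>))"
      unfolding aoi_tail_def \<alpha>_def \<beta>_def using assms
      by (subst (1 2) binomial_atMost_1_factor) auto
    then show "aoi_tail a b n = (1 - \<alpha> - \<beta> + \<alpha> * \<beta>) * r^n
      + (\<alpha> + \<beta> - 3 * \<alpha> * \<beta>) * (real (Suc n) * r^n) + \<alpha> * \<beta> * (real (Suc n) * real (Suc (Suc n)) * r^n)"
      unfolding r_def power_mult_distrib by (simp add: algebra_simps)
  qed
  also have "\<dots> sums ((1 - \<alpha> - \<beta> + \<alpha> * \<beta>) * (1 / (1 - r))
      + (\<alpha> + \<beta> - 3 * \<alpha> * \<beta>) * (1 / (1 - r)^2) + \<alpha> * \<beta> * (2 / (1 - r)^3))"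
    using \<open>\<bar>r\<bar> < 1\<close>
    by (intro sums_add sums_mult geometric_sums geometric_deriv_sums sums_Suc_mult_Suc_Suc_power) auto
  also have "(1 - \<alpha> - \<beta> + \<alpha> * \<beta>) * (1 / (1 - r)) + (\<alpha> + \<beta> - 3 * \<alpha> * \<beta>) * (1 / (1 - r)^2)
      + \<alpha> * \<beta> * (2 / (1 - r)^3)
    = 2 * (a^2 + b^2 + 3*a*b - 3*a^2*b - 3*a*b^2 + 2*a^2*b^2) / (a + b - a*b)^3"
  proof -
    define A where "A = 1 - a"
    define B where "B = 1 - b"
    define d where "d = a + b - a * b"
    have d: "1 - r = d" and nonzero: "A \<noteq> 0" "B \<noteq> 0" "d \<noteq> 0"
      using assms \<open>r < 1\<close> by (auto simp: r_def d_def A_def B_def algebra_simps)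
    have "(1 - \<alpha> - \<beta> + \<alpha> * \<beta>) * (1 / (1 - r)) + (\<alpha> + \<beta> - 3 * \<alpha> * \<beta>) * (1 / (1 - r)^2)
        + \<alpha> * \<beta> * (2 / (1 - r)^3)
      = ((A - a) * (B - b) * d^2 + (a * B + b * A - 3 * a * b) * d + 2 * a * b) / (A * B * d^3)"
      unfolding d \<alpha>_def \<beta>_def A_def[symmetric] B_def[symmetric] using nonzero
      by (simp add: field_simps power2_eq_square power3_eq_cube)
    also have "(A - a) * (B - b) * d^2 + (a * B + b * A - 3 * a * b) * d + 2 * a * b
        = 2 * (a^2 + b^2 + 3*a*b - 3*a^2*b - 3*a*b^2 + 2*a^2*b^2) * (A * B)"
      unfolding A_def B_def d_def by algebra
    finally show ?thesis
      using nonzero by (simp add: d_def)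
  qed
  finally show ?thesis .
qed

theorem lemma2:
  fixes muA muB :: real
  assumes "0 < muA" "muA < 1" "0 < muB" "muB < 1"
  shows "avg_aoi_upto muA muB \<longlonglongrightarrow>
    2 * (muA^2 + muB^2 + 3*muA*muB - 3*muA^2*muB - 3*muA*muB^2 + 2*muA^2*muB^2)
      / (muA + muB - muA*muB)^3"
proof -
  have "expected_aoi muA muB = (\<lambda>t. \<Sum>k<t. aoi_tail muA muB k)"
    using assms by (simp add: fun_eq_iff expected_aoi_eq_sum_aoi_tail)
  then have "expected_aoi muA muB \<longlonglongrightarrow>
      2 * (muA^2 + muB^2 + 3*muA*muB - 3*muA^2*muB - 3*muA*muB^2 + 2*muA^2*muB^2)
        / (muA + muB - muA*muB)^3"
    using aoi_tail_sums[OF assms] by (simp add: sums_def)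
  then show ?thesis
    unfolding avg_aoi_upto_def by (rule LIMSEQ_cesaro_mean)
qed

end
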